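(* (Dual SDP upper bound for the $\ell_\infty$-FGL of two-layer networks.) Let $W\in\mathbb{R}^{n\times m}$, $u\in\mathbb{R}^{1\times n}$ and real numbers $a\le b$. Suppose $\zeta\in\mathbb{R}$, $\lambda\in\mathbb{R}^n_+$, $\tau\in\mathbb{R}^m_+$ are such that, with $T_1=\mathrm{diag}(\lambda)$ and $T_2=\mathrm{diag}(\tau)$, the $(1+m+n)\times(1+m+n)$ block matrix satisfies $$\begin{pmatrix}\sum_{j=1}^m\tau_j-\zeta& 0& u\\ 0& -2ab\,W^TT_1W-T_2& (a+b)W^TT_1\\ u^T& (a+b)T_1W& -2T_1\end{pmatrix}\preceq0 .$$ Then $$\frac{\zeta}{2}\;\ge\;\max_{y\in[a,b]^n}\big\|W^T\mathrm{diag}(y)u^T\big\|_1 .$$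
   Context: $\mathrm{diag}(v)$ is the diagonal matrix with diagonal $v$; $P\preceq0$ means $-P$ is positive semidefinite; $\mathbb{R}_+=[0,\infty)$. For ReLU ($a=0,b=1$) the right-hand side is at least the $\ell_\infty$ formal global Lipschitz constant $\max_{y\in\{0,1\}^n}\|W^T\mathrm{diag}(y)u^T\|_1$ of $x\mapsto u\,\mathrm{ReLU}(Wx)$. *)

theory Defs
  imports "HOL-Analysis.Analysis"
begin

definition diag_mat :: "real ^ 'n \<Rightarrow> real ^ 'n ^ 'n" where
  "diag_mat v = (\<chi> i j. if i = j then v $ i else 0)"

definition psd_mat :: "real ^ 'k ^ 'k \<Rightarrow> bool" where
  "psd_mat M \<longleftrightarrow> transpose M = M \<and> (\<forall>x. 0 \<le> x \<bullet> (M *v x))"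

definition nsd_mat :: "real ^ 'k ^ 'k \<Rightarrow> bool" where
  "nsd_mat P \<longleftrightarrow> psd_mat (- P)"

text \<open>The (1+m+n) x (1+m+n) block matrix of the dual SDP, with index type
  unit + ('m + 'n): the unit block is the scalar row/column, 'm the input
  block and 'n the hidden block.  W :: real^'m^'n is an n x m matrix, u a
  row vector of length n.\<close>
definition dual_block ::
  "real ^ 'm ^ 'n \<Rightarrow> real ^ 'n \<Rightarrow> real \<Rightarrow> real \<Rightarrow> real \<Rightarrow> real ^ 'n \<Rightarrow> real ^ 'm
   \<Rightarrow> real ^ (unit + ('m + 'n)) ^ (unit + ('m + 'n))" where
  "dual_block W u a b zeta lam tau =
    (let T1 = diag_mat lam; T2 = diag_mat tau;
         B22 = (- (2 * a * b)) *\<^sub>R (transpose W ** T1 ** W) - T2;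
         B23 = (a + b) *\<^sub>R (transpose W ** T1);
         B32 = (a + b) *\<^sub>R (T1 ** W);
         B33 = (- 2) *\<^sub>R T1
     in (\<chi> p q. (case p of
          Inl _ \<Rightarrow> (case q of Inl _ \<Rightarrow> sum (\<lambda>j. tau $ j) UNIV - zeta
                             | Inr (Inl j) \<Rightarrow> 0
                             | Inr (Inr i) \<Rightarrow> u $ i)
        | Inr (Inl j) \<Rightarrow> (case q of Inl _ \<Rightarrow> 0
                             | Inr (Inl j') \<Rightarrow> B22 $ j $ j'
                             | Inr (Inr i) \<Rightarrow> B23 $ j $ i)
        | Inr (Inr i) \<Rightarrow> (case q of Inl _ \<Rightarrow> u $ i
                             | Inr (Inl j) \<Rightarrow> B32 $ i $ j
                             | Inr (Inr i') \<Rightarrow> B33 $ i $ i'))))"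

definition l1_norm :: "real ^ 'k \<Rightarrow> real" where
  "l1_norm x = (\<Sum>j\<in>UNIV. \<bar>x $ j\<bar>)"

end

theory Submission imports Defs begin

text \<open>Evaluate the quadratic form of the dual block matrix at the vector \<open>(1, s, t)\<close> with
  \<open>s \<in> {-1, 1}\<^sup>m\<close> and \<open>t = diag(y) W s\<close>.  It equals
  \<open>\<Sum>\<tau> - \<zeta> - \<Sum>\<^sub>j \<tau>\<^sub>j s\<^sub>j\<^sup>2 + 2 u t - 2 \<Sum>\<^sub>i \<lambda>\<^sub>i (y\<^sub>i - a)(y\<^sub>i - b) (W s)\<^sub>i\<^sup>2\<close>:
  the \<open>\<tau>\<close>-terms cancel because \<open>s\<^sub>j\<^sup>2 = 1\<close>, and the last sum is nonpositive for
  \<open>y \<in> [a, b]\<^sup>n\<close>, so negative semidefiniteness yields \<open>2 u t \<le> \<zeta>\<close>.  Taking for \<open>s\<close> the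
  sign pattern of \<open>W\<^sup>T diag(y) u\<^sup>T\<close> turns \<open>u t\<close> into its \<open>\<ell>\<^sub>1\<close> norm.\<close>

lemma sum_UNIV_Plus:
  "sum f (UNIV :: ('a::finite + 'b::finite) set) = (\<Sum>x\<in>UNIV. f (Inl x)) + (\<Sum>y\<in>UNIV. f (Inr y))"
proof -
  have "sum f UNIV = sum f (UNIV <+> UNIV)" by simp
  also have "\<dots> = sum (f \<circ> Inl) UNIV + sum (f \<circ> Inr) UNIV" by (rule sum.Plus) auto
  finally show ?thesis by (simp add: o_def)
qed

lemma nsd_mat_quadratic_form_nonpos:
  assumes "nsd_mat P"
  shows "x \<bullet> (P *v x) \<le> 0"
proof -
  have "0 \<le> x \<bullet> ((- P) *v x)"
    using assms unfolding nsd_mat_def psd_mat_def by blast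
  also have "(- P) *v x = - (P *v x)"
    by (simp add: matrix_vector_mult_def vec_eq_iff sum_negf)
  finally show ?thesis by simp
qed

lemma diag_mat_mult_vec: "diag_mat v *v x = (\<chi> i. v $ i * x $ i)"
  by (simp add: diag_mat_def matrix_vector_mult_def vec_eq_iff if_distrib[of "\<lambda>z. z * _"] cong: if_cong)

lemma l1_norm_eq_sign_inner:
  fixes c :: "real ^ 'k"
  shows "\<exists>s. (\<forall>j. (s $ j)\<^sup>2 = 1) \<and> l1_norm c = s \<bullet> c"
proof (intro exI conjI allI)
  let ?s = "(\<chi> j. if 0 \<le> c $ j then 1 else - 1) :: real ^ 'k"
  show "(?s $ j)\<^sup>2 = 1" for j by simp
  show "l1_norm c = ?s \<bullet> c"
    unfolding l1_norm_def inner_vec_def by (rule sum.cong) auto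
qed

lemma dual_block_nth:
  fixes W :: "real ^ 'm ^ 'n" and u lam :: "real ^ 'n" and tau :: "real ^ 'm" and a b zeta :: real
  defines "M \<equiv> dual_block W u a b zeta lam tau"
  shows "M $ Inl z $ Inl z' = sum (($) tau) UNIV - zeta"
    and "M $ Inl z $ Inr (Inl j) = 0"
    and "M $ Inl z $ Inr (Inr i) = u $ i"
    and "M $ Inr (Inl j) $ Inl z = 0"
    and "M $ Inr (Inr i) $ Inl z = u $ i"
    and "M $ Inr (Inl j) $ Inr (Inl j') =
           - 2 * a * b * (\<Sum>k\<in>UNIV. W $ k $ j * lam $ k * W $ k $ j') - (if j = j' then tau $ j else 0)"
    and "M $ Inr (Inl j) $ Inr (Inr i) = (a + b) * (lam $ i * W $ i $ j)"
    and "M $ Inr (Inr i) $ Inr (Inl j) = (a + b) * (lam $ i * W $ i $ j)"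
    and "M $ Inr (Inr i) $ Inr (Inr i') = - 2 * (if i = i' then lam $ i else 0)"
  unfolding M_def dual_block_def Let_def
  by (simp_all add: matrix_matrix_mult_def diag_mat_def transpose_def if_distrib[of "\<lambda>z. z * _"]
      if_distrib[of "\<lambda>z. _ * z"] sum.delta sum.delta' sum_distrib_left mult.assoc sum_negf cong: if_cong)

lemma quadratic_form_transpose_diag_mult:
  fixes W :: "real ^ 'm ^ 'n" and lam :: "real ^ 'n" and s :: "real ^ 'm"
  shows "(\<Sum>j\<in>UNIV. s $ j * (\<Sum>j'\<in>UNIV. (\<Sum>k\<in>UNIV. W $ k $ j * lam $ k * W $ k $ j') * s $ j'))
    = (\<Sum>k\<in>UNIV. lam $ k * ((W *v s) $ k)\<^sup>2)"
proof -
  have "(\<Sum>j\<in>UNIV. s $ j * (\<Sum>j'\<in>UNIV. (\<Sum>k\<in>UNIV. W $ k $ j * lam $ k * W $ k $ j') * s $ j'))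
      = (\<Sum>j\<in>UNIV. \<Sum>k\<in>UNIV. \<Sum>j'\<in>UNIV. lam $ k * (W $ k $ j * s $ j) * (W $ k $ j' * s $ j'))"
    unfolding sum_distrib_left sum_distrib_right
    by (intro sum.cong refl, subst sum.swap) (simp add: algebra_simps)
  also have "\<dots> = (\<Sum>k\<in>UNIV. \<Sum>j\<in>UNIV. \<Sum>j'\<in>UNIV. lam $ k * (W $ k $ j * s $ j) * (W $ k $ j' * s $ j'))"
    by (rule sum.swap)
  also have "\<dots> = (\<Sum>k\<in>UNIV. lam $ k *
      ((\<Sum>j\<in>UNIV. W $ k $ j * s $ j) * (\<Sum>j'\<in>UNIV. W $ k $ j' * s $ j')))"
    by (intro sum.cong refl) (subst sum_product, simp add: sum_distrib_left mult.assoc)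
  also have "\<dots> = (\<Sum>k\<in>UNIV. lam $ k * ((W *v s) $ k)\<^sup>2)"
    by (simp add: matrix_vector_mult_def power2_eq_square)
  finally show ?thesis .
qed

definition test_vec :: "real ^ 'm \<Rightarrow> real ^ 'n \<Rightarrow> real ^ (unit + ('m + 'n))" where
  "test_vec s t = (\<chi> p. case p of Inl _ \<Rightarrow> 1 | Inr (Inl j) \<Rightarrow> s $ j | Inr (Inr i) \<Rightarrow> t $ i)"

lemma test_vec_quadratic_form:
  fixes M :: "real ^ (unit + ('m::finite + 'n::finite)) ^ (unit + ('m + 'n))"
  shows "test_vec s t \<bullet> (M *v test_vec s t)
    = M $ Inl () $ Inl ()
      + (\<Sum>j\<in>UNIV. (M $ Inl () $ Inr (Inl j) + M $ Inr (Inl j) $ Inl ()) * s $ j)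
      + (\<Sum>i\<in>UNIV. (M $ Inl () $ Inr (Inr i) + M $ Inr (Inr i) $ Inl ()) * t $ i)
      + (\<Sum>j\<in>UNIV. s $ j * (\<Sum>j'\<in>UNIV. M $ Inr (Inl j) $ Inr (Inl j') * s $ j'))
      + (\<Sum>j\<in>UNIV. s $ j * (\<Sum>i\<in>UNIV. M $ Inr (Inl j) $ Inr (Inr i) * t $ i))
      + (\<Sum>i\<in>UNIV. t $ i * (\<Sum>j\<in>UNIV. M $ Inr (Inr i) $ Inr (Inl j) * s $ j))
      + (\<Sum>i\<in>UNIV. t $ i * (\<Sum>i'\<in>UNIV. M $ Inr (Inr i) $ Inr (Inr i') * t $ i'))"
  unfolding inner_vec_def matrix_vector_mult_def
  by (simp add: sum_UNIV_Plus test_vec_def UNIV_unit distrib_left distrib_right sum.distrib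
      sum_distrib_left algebra_simps)

lemma dual_block_quadratic_form:
  fixes W :: "real ^ 'm ^ 'n" and u lam t :: "real ^ 'n" and tau s :: "real ^ 'm" and a b zeta :: real
  defines "v \<equiv> W *v s"
  shows "test_vec s t \<bullet> (dual_block W u a b zeta lam tau *v test_vec s t)
    = sum (($) tau) UNIV - zeta - (\<Sum>j\<in>UNIV. tau $ j * (s $ j)\<^sup>2) + 2 * (u \<bullet> t)
      - 2 * (\<Sum>i\<in>UNIV. lam $ i * (t $ i - a * v $ i) * (t $ i - b * v $ i))"
proof -
  let ?M = "dual_block W u a b zeta lam tau"
  have input_input: "(\<Sum>j\<in>UNIV. s $ j * (\<Sum>j'\<in>UNIV. ?M $ Inr (Inl j) $ Inr (Inl j') * s $ j'))
      = - 2 * a * b * (\<Sum>i\<in>UNIV. lam $ i * (v $ i)\<^sup>2) - (\<Sum>j\<in>UNIV. tau $ j * (s $ j)\<^sup>2)"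
    unfolding dual_block_nth v_def quadratic_form_transpose_diag_mult[symmetric]
    by (simp add: algebra_simps sum_distrib_left sum_subtractf if_distrib[of "\<lambda>z. z * _"]
        if_distrib[of "\<lambda>z. _ * z"] power2_eq_square cong: if_cong)
  have input_hidden: "(\<Sum>j\<in>UNIV. s $ j * (\<Sum>i\<in>UNIV. ?M $ Inr (Inl j) $ Inr (Inr i) * t $ i))
      = (a + b) * (\<Sum>i\<in>UNIV. lam $ i * v $ i * t $ i)"
    unfolding dual_block_nth v_def matrix_vector_mult_def
    by (simp add: sum_distrib_left sum_distrib_right mult_ac, rule sum.swap)
  have hidden_input: "(\<Sum>i\<in>UNIV. t $ i * (\<Sum>j\<in>UNIV. ?M $ Inr (Inr i) $ Inr (Inl j) * s $ j))
      = (a + b) * (\<Sum>i\<in>UNIV. lam $ i * v $ i * t $ i)"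
    unfolding dual_block_nth v_def matrix_vector_mult_def
    by (simp add: sum_distrib_left sum_distrib_right mult_ac)
  have hidden_hidden: "(\<Sum>i\<in>UNIV. t $ i * (\<Sum>i'\<in>UNIV. ?M $ Inr (Inr i) $ Inr (Inr i') * t $ i'))
      = - 2 * (\<Sum>i\<in>UNIV. lam $ i * (t $ i)\<^sup>2)"
    unfolding dual_block_nth
    by (simp add: sum_distrib_left power2_eq_square algebra_simps if_distrib[of "\<lambda>z. z * _"]
        if_distrib[of "\<lambda>z. _ * z"] cong: if_cong)
  have "test_vec s t \<bullet> (?M *v test_vec s t)
    = sum (($) tau) UNIV - zeta + 2 * (u \<bullet> t) - (\<Sum>j\<in>UNIV. tau $ j * (s $ j)\<^sup>2)
      - 2 * a * b * (\<Sum>i\<in>UNIV. lam $ i * (v $ i)\<^sup>2) + 2 * (a + b) * (\<Sum>i\<in>UNIV. lam $ i * v $ i * t $ i)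
      - 2 * (\<Sum>i\<in>UNIV. lam $ i * (t $ i)\<^sup>2)"
    unfolding test_vec_quadratic_form input_input input_hidden hidden_input hidden_hidden
    by (simp add: dual_block_nth inner_vec_def sum_distrib_left sum_negf algebra_simps)
  then show ?thesis
    by (simp add: algebra_simps power2_eq_square sum_subtractf sum.distrib sum_distrib_left)
qed

lemma sum_diag_mat_interval_nonpos:
  fixes lam y v :: "real ^ 'n"
  assumes "\<forall>i. 0 \<le> lam $ i" and "\<forall>i. a \<le> y $ i \<and> y $ i \<le> b"
  shows "(\<Sum>i\<in>UNIV. lam $ i * ((diag_mat y *v v) $ i - a * v $ i) * ((diag_mat y *v v) $ i - b * v $ i))
    \<le> 0"
proof (rule sum_nonpos)
  fix i
  have "((diag_mat y *v v) $ i - a * v $ i) * ((diag_mat y *v v) $ i - b * v $ i)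
      = (y $ i - a) * (y $ i - b) * (v $ i)\<^sup>2"
    by (simp add: diag_mat_mult_vec power2_eq_square algebra_simps)
  also have "\<dots> \<le> 0"
    using assms(2) by (simp add: mult_nonneg_nonpos mult_nonpos_nonneg)
  finally show "lam $ i * ((diag_mat y *v v) $ i - a * v $ i) * ((diag_mat y *v v) $ i - b * v $ i) \<le> 0"
    using assms(1) by (simp add: mult_nonneg_nonpos mult.assoc)
qed

lemma inner_diag_mat_mult_transpose:
  fixes W :: "real ^ 'm ^ 'n" and u y :: "real ^ 'n" and s :: "real ^ 'm"
  shows "u \<bullet> (diag_mat y *v (W *v s)) = s \<bullet> (transpose W *v (diag_mat y *v u))"
proof -
  have "u \<bullet> (diag_mat y *v (W *v s)) = (diag_mat y *v u) \<bullet> (W *v s)"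
    by (simp add: diag_mat_mult_vec inner_vec_def mult_ac)
  also have "\<dots> = ((diag_mat y *v u) v* W) \<bullet> s"
    by (rule dot_lmul_matrix[symmetric])
  finally show ?thesis
    by (simp add: inner_commute)
qed

theorem mainTheorem9:
  fixes W :: "real ^ 'm ^ 'n" and u :: "real ^ 'n"
    and a b zeta :: real and lam :: "real ^ 'n" and tau :: "real ^ 'm"
  assumes "a \<le> b"
    and "\<forall>i. 0 \<le> lam $ i"
    and "\<forall>j. 0 \<le> tau $ j"
    and "nsd_mat (dual_block W u a b zeta lam tau)"
  shows "\<forall>y :: real ^ 'n. (\<forall>i. a \<le> y $ i \<and> y $ i \<le> b) \<longrightarrow>
           l1_norm (transpose W *v (diag_mat y *v u)) \<le> zeta / 2"
proof (intro allI impI)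
  fix y :: "real ^ 'n"
  assume y: "\<forall>i. a \<le> y $ i \<and> y $ i \<le> b"
  obtain s where s_sq: "\<forall>j. (s $ j)\<^sup>2 = 1"
    and l1: "l1_norm (transpose W *v (diag_mat y *v u)) = s \<bullet> (transpose W *v (diag_mat y *v u))"
    using l1_norm_eq_sign_inner by blast
  define v where "v = W *v s"
  define t where "t = diag_mat y *v v"
  have hidden_nonpos: "(\<Sum>i\<in>UNIV. lam $ i * (t $ i - a * v $ i) * (t $ i - b * v $ i)) \<le> 0"
    unfolding t_def using assms(2) y by (rule sum_diag_mat_interval_nonpos)
  have "test_vec s t \<bullet> (dual_block W u a b zeta lam tau *v test_vec s t) \<le> 0"
    using assms(4) by (rule nsd_mat_quadratic_form_nonpos)
  then have "u \<bullet> t \<le> zeta / 2"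
    using hidden_nonpos s_sq by (simp add: dual_block_quadratic_form v_def)
  moreover have "u \<bullet> t = l1_norm (transpose W *v (diag_mat y *v u))"
    unfolding l1 t_def v_def by (rule inner_diag_mat_mult_transpose)
  ultimately show "l1_norm (transpose W *v (diag_mat y *v u)) \<le> zeta / 2"
    by simp
qed

end
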